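(* Let $1\le k\le n$ and let $K$ be a $k$-dimensional vector space. Let $X(k,n)=\{(I,J)\in\mathrm{Hom}(\mathbb{C}^n_x,K)\oplus\mathrm{Hom}^{\mathrm{st}}(K,\mathbb{C}^n_y)\}/GL(K)$ and $X^\vee(k,n)=\{(I,J)\in\mathrm{Hom}^{\mathrm{st}}(\mathbb{C}^n_x,K)\oplus\mathrm{Hom}(K,\mathbb{C}^n_y)\}/GL(K)$, where $\mathrm{Hom}^{\mathrm{st}}$ denotes maps of maximal rank. Then the $\mathbb{C}^\times_q\times T_x\times T_y$-equivariant Hirzebruch genera agree: $$\chi\Big(X(k,n),\sum_i(-t)^i\Omega^i\Big)=\chi\Big(X^\vee(k,n),\sum_i(-t)^i\Omega^i\Big),$$ equivalently, as rational functions, $$\sum_{\substack{I\subset\{1,\dots,n\}\\|I|=k}}\prod_{\substack{i\in I\\ j\notin I}}\frac{1-ty_j/y_i}{1-y_j/y_i}\prod_{\substack{i\in I\\ \ell=1,\dots,n}}\frac{1-tq^{-1}y_i/x_\ell}{1-q^{-1}y_i/x_\ell}=\sum_{\substack{I\subset\{1,\dots,n\}\\|I|=k}}\prod_{\substack{i\in I\\ j\notin I}}\frac{1-tx_i/x_j}{1-x_i/x_j}\prod_{\substack{\ell\in I\\ i=1,\dots,n}}\frac{1-tq^{-1}y_i/x_\ell}{1-q^{-1}y_i/x_\ell}.$$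
   Context: $T_x,T_y$ are maximal tori of $GL(\mathbb{C}^n_x)$, $GL(\mathbb{C}^n_y)$ with coordinates $x_\ell$, $y_i$; $\mathbb{C}^\times_q$ scales $\mathrm{Hom}(\mathbb{C}^n_x,K)$ with weight $+1$ and acts trivially on $\mathrm{Hom}(K,\mathbb{C}^n_y)$. With $\mathscr{K}$ the tautological bundle, the $K$-theory class of the tangent bundle on both spaces is $\mathbb{C}^n_y\otimes\mathscr{K}^*+q\mathscr{K}\otimes(\mathbb{C}^n_x)^*-\mathscr{K}\otimes\mathscr{K}^*$. Torus fixed points on both are indexed by $I\subset\{1,\dots,n\}$, $|I|=k$, with $\mathscr{K}|_I=\sum_{i\in I}y_i^{-1}$ on $X$ and $\mathscr{K}|_I=\sum_{\ell\in I}(qx_\ell)^{-1}$ on $X^\vee$. The Hirzebruch genus $\chi(X,\sum_i(-t)^i\Omega^i_X)$ of these nonproper spaces is defined by equivariant localization as a rational function of $(q,x,y,t)$. *)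

theory Defs
  imports Complex_Main
begin

definition fixed_pts :: "nat \<Rightarrow> nat \<Rightarrow> nat set set" where
  "fixed_pts k n = {I. I \<subseteq> {1..n} \<and> card I = k}"

definition hirz_X :: "nat \<Rightarrow> nat \<Rightarrow> complex \<Rightarrow> complex \<Rightarrow> (nat \<Rightarrow> complex) \<Rightarrow> (nat \<Rightarrow> complex) \<Rightarrow> complex" where
  "hirz_X k n q t x y =
     (\<Sum>I\<in>fixed_pts k n.
        (\<Prod>i\<in>I. \<Prod>j\<in>{1..n} - I. (1 - t * y j / y i) / (1 - y j / y i)) *
        (\<Prod>i\<in>I. \<Prod>l\<in>{1..n}. (1 - t * y i / (q * x l)) / (1 - y i / (q * x l))))"

definition hirz_Xdual :: "nat \<Rightarrow> nat \<Rightarrow> complex \<Rightarrow> complex \<Rightarrow> (nat \<Rightarrow> complex) \<Rightarrow> (nat \<Rightarrow> complex) \<Rightarrow> complex" where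
  "hirz_Xdual k n q t x y =
     (\<Sum>I\<in>fixed_pts k n.
        (\<Prod>i\<in>I. \<Prod>j\<in>{1..n} - I. (1 - t * x i / x j) / (1 - x i / x j)) *
        (\<Prod>l\<in>I. \<Prod>i\<in>{1..n}. (1 - t * y i / (q * x l)) / (1 - y i / (q * x l))))"

end

theory Submission
  imports Defs "HOL-Computational_Algebra.Polynomial" "HOL-Analysis.Line_Segment"
begin

(* Regard one weight a_alpha = z of the first index set as a variable and clear
   denominators: the difference of the two localization sums, multiplied by
   prod_l (z - b_l) * prod_j (z - a_j), is a polynomial in z of degree at most 2n - 1.
   At z = b_m and at z = b_m / t it is a multiple of the same difference for n - 1, with m removed
   from the second index set, so it vanishes there by induction. For all but finitely many t these
   are 2n distinct roots, hence the polynomial is zero; the remaining t follow by continuity.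
   The theorem is the instance a = y, b = q x on the index sets {1..n}. *)

definition polyfun_le :: "nat \<Rightarrow> ('a::comm_ring_1 \<Rightarrow> 'a) \<Rightarrow> bool" where
  "polyfun_le d f \<longleftrightarrow> (\<exists>p. degree p \<le> d \<and> poly p = f)"

lemma polyfun_le_const: "polyfun_le d (\<lambda>z. c)"
  unfolding polyfun_le_def by (intro exI[of _ "[:c:]"]) auto

lemma polyfun_le_affine: "polyfun_le 1 (\<lambda>z. u * z - v)"
  unfolding polyfun_le_def by (intro exI[of _ "[:-v, u:]"]) (auto simp: algebra_simps)

lemma polyfun_le_shift: "polyfun_le 1 (\<lambda>z. z - v)"
  using polyfun_le_affine[of 1 v] by simp

lemma polyfun_le_add:
  assumes "polyfun_le d f" "polyfun_le d g"
  shows "polyfun_le d (\<lambda>z. f z + g z)"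
proof -
  obtain p q where "degree p \<le> d" "poly p = f" "degree q \<le> d" "poly q = g"
    using assms unfolding polyfun_le_def by blast
  then show ?thesis
    unfolding polyfun_le_def by (intro exI[of _ "p + q"]) (auto intro: degree_add_le)
qed

lemma polyfun_le_mult:
  assumes "polyfun_le d f" "polyfun_le e g"
  shows "polyfun_le (d + e) (\<lambda>z. f z * g z)"
proof -
  obtain p q where "degree p \<le> d" "poly p = f" "degree q \<le> e" "poly q = g"
    using assms unfolding polyfun_le_def by blast
  then show ?thesis
    unfolding polyfun_le_def
    by (intro exI[of _ "p * q"]) (auto intro: order.trans[OF degree_mult_le])
qed

lemma polyfun_le_cmult: "polyfun_le d f \<Longrightarrow> polyfun_le d (\<lambda>z. c * f z)"
  using polyfun_le_mult[OF polyfun_le_const[of 0 c]] by simp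

lemma polyfun_le_diff: "polyfun_le d f \<Longrightarrow> polyfun_le d g \<Longrightarrow> polyfun_le d (\<lambda>z. f z - g z)"
  using polyfun_le_add[OF _ polyfun_le_cmult[of d g "- 1"]] by simp

lemma polyfun_le_sum:
  "finite S \<Longrightarrow> (\<And>i. i \<in> S \<Longrightarrow> polyfun_le d (f i)) \<Longrightarrow> polyfun_le d (\<lambda>z. \<Sum>i\<in>S. f i z)"
  by (induction S rule: finite_induct) (auto intro: polyfun_le_const polyfun_le_add)

lemma polyfun_le_prod:
  "finite S \<Longrightarrow> (\<And>i. i \<in> S \<Longrightarrow> polyfun_le 1 (f i)) \<Longrightarrow> polyfun_le (card S) (\<lambda>z. \<Prod>i\<in>S. f i z)"
proof (induction S rule: finite_induct)
  case (insert x S)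
  then show ?case
    using polyfun_le_mult[of 1 "f x" "card S"] by simp
qed (simp add: polyfun_le_const)

lemma polyfun_le_eq_0:
  fixes f :: "'a::idom \<Rightarrow> 'a"
  assumes "polyfun_le d f" "finite S" "d < card S" "\<And>z. z \<in> S \<Longrightarrow> f z = 0"
  shows "f z = 0"
proof -
  obtain p where p: "degree p \<le> d" "poly p = f"
    using assms(1) unfolding polyfun_le_def by blast
  have "p = 0"
  proof (rule ccontr)
    assume "p \<noteq> 0"
    have "S \<subseteq> {x. poly p x = 0}"
      using p assms(4) by auto
    then have "card S \<le> card {x. poly p x = 0}"
      using \<open>p \<noteq> 0\<close> by (intro card_mono poly_roots_finite)
    also have "\<dots> \<le> degree p"
      using \<open>p \<noteq> 0\<close> by (rule card_poly_roots_bound)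
    finally show False
      using p(1) assms(3) by simp
  qed
  then show ?thesis
    using p by auto
qed

lemma continuous_on_const_off_finite:
  fixes f :: "'a::{real_normed_vector, perfect_space} \<Rightarrow> 'b::t1_space"
  assumes "continuous_on UNIV f" "finite S" "\<And>z. z \<notin> S \<Longrightarrow> f z = c"
  shows "f z = c"
  using continuous_constant_on_closure[of "- S" f c z] assms
  by (simp add: closure_complement empty_interior_finite)

definition subsets_of_card :: "nat \<Rightarrow> 'a set \<Rightarrow> 'a set set" where
  "subsets_of_card k A = {I. I \<subseteq> A \<and> card I = k}"

lemma mem_subsets_of_card [simp]: "I \<in> subsets_of_card k A \<longleftrightarrow> I \<subseteq> A \<and> card I = k"
  unfolding subsets_of_card_def by simp

lemma finite_subsets_of_card [simp]: "finite A \<Longrightarrow> finite (subsets_of_card k A)"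
  unfolding subsets_of_card_def by (rule finite_subset[of _ "Pow A"]) auto

lemma subsets_of_card_0: "finite A \<Longrightarrow> subsets_of_card 0 A = {{}}"
  unfolding subsets_of_card_def by (auto dest: finite_subset)

lemma subsets_of_card_Suc_empty: "subsets_of_card (Suc k) {} = {}"
  unfolding subsets_of_card_def by auto

lemma subsets_of_card_Suc_insert:
  assumes "finite A" "x \<notin> A"
  shows "subsets_of_card (Suc k) (insert x A) = subsets_of_card (Suc k) A \<union> insert x ` subsets_of_card k A"
proof -
  have "I \<in> insert x ` subsets_of_card k A"
    if "I \<subseteq> insert x A" "card I = Suc k" "x \<in> I" for I
  proof
    show "I = insert x (I - {x})" using \<open>x \<in> I\<close> by auto
    show "I - {x} \<in> subsets_of_card k A"
      using that assms by (auto intro: finite_subset)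
  qed
  moreover have "card (insert x J) = Suc k" if "J \<subseteq> A" "card J = k" for J
    using that assms by (metis card_insert_disjoint finite_subset subsetD)
  ultimately show ?thesis
    using assms unfolding subsets_of_card_def by auto
qed

lemma sum_subsets_of_card_Suc_insert:
  assumes "finite A" "x \<notin> A"
  shows "(\<Sum>I\<in>subsets_of_card (Suc k) (insert x A). g I)
       = (\<Sum>I\<in>subsets_of_card (Suc k) A. g I) + (\<Sum>I\<in>subsets_of_card k A. g (insert x I))"
proof -
  have "inj_on (insert x) (subsets_of_card k A)"
    using assms(2) by (intro inj_onI) (metis mem_subsets_of_card Diff_insert_absorb subsetD)
  moreover have "subsets_of_card (Suc k) A \<inter> insert x ` subsets_of_card k A = {}"
    using assms(2) by auto
  ultimately show ?thesis
    using assms by (simp add: subsets_of_card_Suc_insert sum.union_disjoint sum.reindex)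
qed

definition hirz_factor :: "'a::field \<Rightarrow> 'a \<Rightarrow> 'a" where
  "hirz_factor t w = (1 - t * w) / (1 - w)"

lemma hirz_factor_cancel_num: "c \<noteq> 0 \<Longrightarrow> z \<noteq> c \<Longrightarrow> hirz_factor t (z / c) * (z - c) = t * z - c"
  unfolding hirz_factor_def by (simp add: field_simps)

lemma hirz_factor_cancel_den: "z \<noteq> 0 \<Longrightarrow> z \<noteq> c \<Longrightarrow> hirz_factor t (c / z) * (z - c) = z - t * c"
  unfolding hirz_factor_def by (simp add: field_simps)

lemma prod_hirz_factor_cancel_num:
  assumes "\<And>i. i \<in> S \<Longrightarrow> c i \<noteq> 0 \<and> z \<noteq> c i"
  shows "(\<Prod>i\<in>S. hirz_factor t (z / c i)) * (\<Prod>i\<in>S. z - c i) = (\<Prod>i\<in>S. t * z - c i)"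
  unfolding prod.distrib[symmetric] using assms
  by (intro prod.cong) (auto intro: hirz_factor_cancel_num)

lemma prod_hirz_factor_cancel_den:
  assumes "\<And>i. i \<in> S \<Longrightarrow> z \<noteq> c i" "z \<noteq> 0"
  shows "(\<Prod>i\<in>S. hirz_factor t (c i / z)) * (\<Prod>i\<in>S. z - c i) = (\<Prod>i\<in>S. z - t * c i)"
  unfolding prod.distrib[symmetric] using assms
  by (intro prod.cong) (auto intro: hirz_factor_cancel_den)

definition contrib_X ::
    "'i set \<Rightarrow> 'i set \<Rightarrow> ('i \<Rightarrow> 'a::field) \<Rightarrow> ('i \<Rightarrow> 'a) \<Rightarrow> 'a \<Rightarrow> 'i set \<Rightarrow> 'a" where
  "contrib_X A B a b t I =
     (\<Prod>i\<in>I. \<Prod>j\<in>A - I. hirz_factor t (a j / a i)) * (\<Prod>i\<in>I. \<Prod>l\<in>B. hirz_factor t (a i / b l))"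

definition contrib_Xdual ::
    "'i set \<Rightarrow> 'i set \<Rightarrow> ('i \<Rightarrow> 'a::field) \<Rightarrow> ('i \<Rightarrow> 'a) \<Rightarrow> 'a \<Rightarrow> 'i set \<Rightarrow> 'a" where
  "contrib_Xdual A B a b t J =
     (\<Prod>i\<in>J. \<Prod>j\<in>B - J. hirz_factor t (b i / b j)) * (\<Prod>l\<in>J. \<Prod>i\<in>A. hirz_factor t (a i / b l))"

definition genus_X ::
    "nat \<Rightarrow> 'i set \<Rightarrow> 'i set \<Rightarrow> ('i \<Rightarrow> 'a::field) \<Rightarrow> ('i \<Rightarrow> 'a) \<Rightarrow> 'a \<Rightarrow> 'a" where
  "genus_X k A B a b t = (\<Sum>I\<in>subsets_of_card k A. contrib_X A B a b t I)"

definition genus_Xdual ::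
    "nat \<Rightarrow> 'i set \<Rightarrow> 'i set \<Rightarrow> ('i \<Rightarrow> 'a::field) \<Rightarrow> ('i \<Rightarrow> 'a) \<Rightarrow> 'a \<Rightarrow> 'a" where
  "genus_Xdual k A B a b t = (\<Sum>J\<in>subsets_of_card k B. contrib_Xdual A B a b t J)"

lemma contrib_X_cong:
  "I \<subseteq> A \<Longrightarrow> (\<And>i. i \<in> A \<Longrightarrow> a' i = a i) \<Longrightarrow> contrib_X A B a' b t I = contrib_X A B a b t I"
  unfolding contrib_X_def by (intro arg_cong2[where f = "(*)"] prod.cong) auto

lemma contrib_Xdual_cong:
  "(\<And>i. i \<in> A \<Longrightarrow> a' i = a i) \<Longrightarrow> contrib_Xdual A B a' b t J = contrib_Xdual A B a b t J"
  unfolding contrib_Xdual_def by (intro arg_cong2[where f = "(*)"] prod.cong) auto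

lemma contrib_X_insert_A:
  assumes "finite A" "\<alpha> \<notin> A" "I \<subseteq> A"
  shows "contrib_X (insert \<alpha> A) B (a(\<alpha> := z)) b t I
       = (\<Prod>i\<in>I. hirz_factor t (z / a i)) * contrib_X A B a b t I"
proof -
  have "insert \<alpha> A - I = insert \<alpha> (A - I)" "\<alpha> \<notin> I"
    using assms by auto
  then have "contrib_X (insert \<alpha> A) B (a(\<alpha> := z)) b t I
           = (\<Prod>i\<in>I. hirz_factor t (z / a i)) * contrib_X A B (a(\<alpha> := z)) b t I"
    using assms by (auto simp: contrib_X_def prod.distrib ac_simps intro!: prod.cong)
  also have "contrib_X A B (a(\<alpha> := z)) b t I = contrib_X A B a b t I"
    using assms by (intro contrib_X_cong) auto
  finally show ?thesis .
qed

lemma contrib_X_insert_A_insert: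
  assumes "finite A" "\<alpha> \<notin> A" "I \<subseteq> A"
  shows "contrib_X (insert \<alpha> A) B (a(\<alpha> := z)) b t (insert \<alpha> I)
       = (\<Prod>j\<in>A - I. hirz_factor t (a j / z)) * (\<Prod>l\<in>B. hirz_factor t (z / b l)) * contrib_X A B a b t I"
proof -
  have "insert \<alpha> A - insert \<alpha> I = A - I" "\<alpha> \<notin> I" "finite I"
    using assms by (auto intro: finite_subset)
  then have "contrib_X (insert \<alpha> A) B (a(\<alpha> := z)) b t (insert \<alpha> I)
       = (\<Prod>j\<in>A - I. hirz_factor t (a j / z)) * (\<Prod>l\<in>B. hirz_factor t (z / b l))
         * contrib_X A B (a(\<alpha> := z)) b t I"
    using assms by (auto simp: contrib_X_def ac_simps intro!: prod.cong)
  also have "contrib_X A B (a(\<alpha> := z)) b t I = contrib_X A B a b t I"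
    using assms by (intro contrib_X_cong) auto
  finally show ?thesis .
qed

lemma contrib_Xdual_insert_A:
  assumes "finite A" "\<alpha> \<notin> A"
  shows "contrib_Xdual (insert \<alpha> A) B (a(\<alpha> := z)) b t J
       = (\<Prod>l\<in>J. hirz_factor t (z / b l)) * contrib_Xdual A B a b t J"
proof -
  have "contrib_Xdual (insert \<alpha> A) B (a(\<alpha> := z)) b t J
       = (\<Prod>l\<in>J. hirz_factor t (z / b l)) * contrib_Xdual A B (a(\<alpha> := z)) b t J"
    using assms by (simp add: contrib_Xdual_def prod.distrib ac_simps)
  also have "contrib_Xdual A B (a(\<alpha> := z)) b t J = contrib_Xdual A B a b t J"
    using assms by (intro contrib_Xdual_cong) auto
  finally show ?thesis .
qed

lemma contrib_X_insert_B:
  assumes "finite B" "m \<notin> B"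
  shows "contrib_X A (insert m B) a b t I = (\<Prod>i\<in>I. hirz_factor t (a i / b m)) * contrib_X A B a b t I"
  using assms by (simp add: contrib_X_def prod.distrib ac_simps)

lemma contrib_Xdual_insert_B:
  assumes "finite B" "m \<notin> B" "J \<subseteq> B"
  shows "contrib_Xdual A (insert m B) a b t J = (\<Prod>i\<in>J. hirz_factor t (b i / b m)) * contrib_Xdual A B a b t J"
proof -
  have "insert m B - J = insert m (B - J)"
    using assms by auto
  then show ?thesis
    using assms by (simp add: contrib_Xdual_def prod.distrib ac_simps)
qed

lemma contrib_Xdual_insert_B_insert:
  assumes "finite B" "m \<notin> B" "J \<subseteq> B"
  shows "contrib_Xdual A (insert m B) a b t (insert m J)
       = (\<Prod>j\<in>B - J. hirz_factor t (b m / b j)) * (\<Prod>i\<in>A. hirz_factor t (a i / b m)) * contrib_Xdual A B a b t J"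
proof -
  have "insert m B - insert m J = B - J" "m \<notin> J" "finite J"
    using assms by (auto intro: finite_subset)
  then show ?thesis
    using assms by (simp add: contrib_Xdual_def ac_simps)
qed

definition cleared_genus_diff ::
    "nat \<Rightarrow> 'i set \<Rightarrow> 'i set \<Rightarrow> ('i \<Rightarrow> 'a::field) \<Rightarrow> ('i \<Rightarrow> 'a) \<Rightarrow> 'a \<Rightarrow> 'a \<Rightarrow> 'a" where
  "cleared_genus_diff k A B a b t z =
     (\<Sum>I\<in>subsets_of_card (Suc k) A. contrib_X A B a b t I *
        ((\<Prod>i\<in>I. t * z - a i) * (\<Prod>j\<in>A - I. z - a j) * (\<Prod>l\<in>B. z - b l)))
   + (\<Sum>I\<in>subsets_of_card k A. contrib_X A B a b t I *
        ((\<Prod>i\<in>I. z - a i) * (\<Prod>j\<in>A - I. z - t * a j) * (\<Prod>l\<in>B. t * z - b l)))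
   - (\<Sum>J\<in>subsets_of_card (Suc k) B. contrib_Xdual A B a b t J *
        ((\<Prod>l\<in>J. t * z - b l) * (\<Prod>l\<in>B - J. z - b l) * (\<Prod>j\<in>A. z - a j)))"

lemma polyfun_le_prod_split:
  assumes "finite A" "I \<subseteq> A" "\<And>i. polyfun_le 1 (f i)" "\<And>i. polyfun_le 1 (g i)"
  shows "polyfun_le (card A) (\<lambda>z. (\<Prod>i\<in>I. f i z) * (\<Prod>i\<in>A - I. g i z))"
proof -
  have "finite I"
    using assms(1,2) by (rule finite_subset[rotated])
  then have "polyfun_le (card I + card (A - I)) (\<lambda>z. (\<Prod>i\<in>I. f i z) * (\<Prod>i\<in>A - I. g i z))"
    using assms by (intro polyfun_le_mult polyfun_le_prod) auto
  moreover have "card I + card (A - I) = card A"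
    using assms(1,2) \<open>finite I\<close> by (simp add: card_Diff_subset card_mono)
  ultimately show ?thesis
    by simp
qed

lemma polyfun_le_cleared_genus_diff:
  assumes "finite A" "finite B"
  shows "polyfun_le (card A + card B) (cleared_genus_diff k A B a b t)"
proof -
  have "polyfun_le (card B + card A)
      (\<lambda>z. (\<Prod>l\<in>J. t * z - b l) * (\<Prod>l\<in>B - J. z - b l) * (\<Prod>j\<in>A. z - a j))"
    if "J \<subseteq> B" for J
    using assms that
    by (intro polyfun_le_mult polyfun_le_prod polyfun_le_prod_split polyfun_le_affine polyfun_le_shift)
  then have dual: "polyfun_le (card A + card B)
      (\<lambda>z. (\<Prod>l\<in>J. t * z - b l) * (\<Prod>l\<in>B - J. z - b l) * (\<Prod>j\<in>A. z - a j))"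
    if "J \<subseteq> B" for J
    using that by (simp add: add.commute)
  show ?thesis
    unfolding cleared_genus_diff_def using assms
    by (intro polyfun_le_diff polyfun_le_add polyfun_le_sum polyfun_le_cmult dual finite_subsets_of_card
        polyfun_le_mult polyfun_le_prod polyfun_le_prod_split polyfun_le_affine polyfun_le_shift) auto
qed

lemma genus_diff_insert_cleared:
  assumes "finite A" "finite B" "\<alpha> \<notin> A" "z \<noteq> 0" "z \<notin> a ` A" "z \<notin> b ` B" "0 \<notin> a ` A" "0 \<notin> b ` B"
  shows "(genus_X (Suc k) (insert \<alpha> A) B (a(\<alpha> := z)) b t - genus_Xdual (Suc k) (insert \<alpha> A) B (a(\<alpha> := z)) b t)
         * ((\<Prod>l\<in>B. z - b l) * (\<Prod>j\<in>A. z - a j)) = cleared_genus_diff k A B a b t z"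
proof -
  let ?D = "(\<Prod>l\<in>B. z - b l) * (\<Prod>j\<in>A. z - a j)"
  have split_A: "(\<Prod>j\<in>A. z - a j) = (\<Prod>j\<in>A - I. z - a j) * (\<Prod>i\<in>I. z - a i)" if "I \<subseteq> A" for I
    using that assms(1) by (rule prod.subset_diff)
  have cancel_A: "(\<Prod>i\<in>I. hirz_factor t (z / a i)) * (\<Prod>i\<in>I. z - a i) = (\<Prod>i\<in>I. t * z - a i)"
    if "I \<subseteq> A" for I
    using that assms by (intro prod_hirz_factor_cancel_num) (auto simp: image_iff)
  have X_out: "contrib_X (insert \<alpha> A) B (a(\<alpha> := z)) b t I * ?D
      = contrib_X A B a b t I * ((\<Prod>i\<in>I. t * z - a i) * (\<Prod>j\<in>A - I. z - a j) * (\<Prod>l\<in>B. z - b l))"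
    if "I \<subseteq> A" for I
    unfolding contrib_X_insert_A[OF assms(1,3) that] split_A[OF that] cancel_A[OF that, symmetric]
    by (simp add: ac_simps)
  have X_in: "contrib_X (insert \<alpha> A) B (a(\<alpha> := z)) b t (insert \<alpha> I) * ?D
      = contrib_X A B a b t I * ((\<Prod>i\<in>I. z - a i) * (\<Prod>j\<in>A - I. z - t * a j) * (\<Prod>l\<in>B. t * z - b l))"
    if "I \<subseteq> A" for I
  proof -
    have cancel_A: "(\<Prod>j\<in>A - I. hirz_factor t (a j / z)) * (\<Prod>j\<in>A - I. z - a j) = (\<Prod>j\<in>A - I. z - t * a j)"
      using assms by (intro prod_hirz_factor_cancel_den) (auto simp: image_iff)
    have cancel_B: "(\<Prod>l\<in>B. hirz_factor t (z / b l)) * (\<Prod>l\<in>B. z - b l) = (\<Prod>l\<in>B. t * z - b l)"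
      using assms by (intro prod_hirz_factor_cancel_num) (auto simp: image_iff)
    show ?thesis
      unfolding contrib_X_insert_A_insert[OF assms(1,3) that] split_A[OF that]
        cancel_A[symmetric] cancel_B[symmetric]
      by (simp add: ac_simps)
  qed
  have Xdual: "contrib_Xdual (insert \<alpha> A) B (a(\<alpha> := z)) b t J * ?D
      = contrib_Xdual A B a b t J * ((\<Prod>l\<in>J. t * z - b l) * (\<Prod>l\<in>B - J. z - b l) * (\<Prod>j\<in>A. z - a j))"
    if "J \<subseteq> B" for J
  proof -
    have cancel_J: "(\<Prod>l\<in>J. hirz_factor t (z / b l)) * (\<Prod>l\<in>J. z - b l) = (\<Prod>l\<in>J. t * z - b l)"
      using that assms by (intro prod_hirz_factor_cancel_num) (auto simp: image_iff)
    have split_B: "(\<Prod>l\<in>B. z - b l) = (\<Prod>l\<in>B - J. z - b l) * (\<Prod>l\<in>J. z - b l)"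
      using that assms(2) by (rule prod.subset_diff)
    show ?thesis
      unfolding contrib_Xdual_insert_A[OF assms(1,3)] split_B cancel_J[symmetric]
      by (simp add: ac_simps)
  qed
  show ?thesis
    unfolding genus_X_def genus_Xdual_def cleared_genus_diff_def sum_subsets_of_card_Suc_insert[OF assms(1,3)]
      left_diff_distrib distrib_right sum_distrib_right
    by (intro arg_cong2[where f = "(-)"] arg_cong2[where f = "(+)"] sum.cong refl X_out X_in Xdual) auto
qed

lemma cleared_genus_diff_at_b:
  assumes "finite A" "finite B" "m \<notin> B" "b m \<noteq> 0" "b m \<notin> a ` A" "b m \<notin> b ` B" "0 \<notin> b ` B"
  shows "cleared_genus_diff k A (insert m B) a b t (b m)
       = (\<Prod>j\<in>A. b m - t * a j) * (\<Prod>l\<in>insert m B. t * b m - b l)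
         * (genus_X k A B a b t - genus_Xdual k A B a b t)"
proof -
  let ?K = "(\<Prod>j\<in>A. b m - t * a j) * (\<Prod>l\<in>insert m B. t * b m - b l)"
  have cancel_A: "(\<Prod>i\<in>I. hirz_factor t (a i / b m)) * (\<Prod>i\<in>I. b m - a i) = (\<Prod>i\<in>I. b m - t * a i)"
    if "I \<subseteq> A" for I
    using that assms by (intro prod_hirz_factor_cancel_den) (auto simp: image_iff)
  have X: "contrib_X A (insert m B) a b t I
        * ((\<Prod>i\<in>I. b m - a i) * (\<Prod>j\<in>A - I. b m - t * a j) * (\<Prod>l\<in>insert m B. t * b m - b l))
      = ?K * contrib_X A B a b t I"
    if "I \<subseteq> A" for I
    unfolding contrib_X_insert_B[OF assms(2,3)] prod.subset_diff[OF that assms(1)] cancel_A[OF that, symmetric]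
    by (simp add: ac_simps)
  have Xdual: "contrib_Xdual A (insert m B) a b t (insert m J)
        * ((\<Prod>l\<in>insert m J. t * b m - b l) * (\<Prod>l\<in>insert m B - insert m J. b m - b l) * (\<Prod>j\<in>A. b m - a j))
      = ?K * contrib_Xdual A B a b t J"
    if "J \<subseteq> B" for J
  proof -
    have J: "finite J" "m \<notin> J" "insert m B - insert m J = B - J"
      using that assms(2,3) by (auto intro: finite_subset)
    have cancel_B: "(\<Prod>j\<in>B - J. hirz_factor t (b m / b j)) * (\<Prod>j\<in>B - J. b m - b j) = (\<Prod>j\<in>B - J. t * b m - b j)"
      using assms by (intro prod_hirz_factor_cancel_num) (auto simp: image_iff)
    have cancel_A: "(\<Prod>i\<in>A. hirz_factor t (a i / b m)) * (\<Prod>i\<in>A. b m - a i) = (\<Prod>i\<in>A. b m - t * a i)"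
      using assms by (intro prod_hirz_factor_cancel_den) (auto simp: image_iff)
    show ?thesis
      unfolding contrib_Xdual_insert_B_insert[OF assms(2,3) that] J(3) prod.insert[OF J(1,2)]
        prod.insert[OF assms(2,3)] prod.subset_diff[OF that assms(2)] cancel_A[symmetric] cancel_B[symmetric]
      by (simp add: ac_simps)
  qed
  have vanish_X: "(\<Sum>I\<in>subsets_of_card (Suc k) A. contrib_X A (insert m B) a b t I
        * ((\<Prod>i\<in>I. t * b m - a i) * (\<Prod>j\<in>A - I. b m - a j) * (\<Prod>l\<in>insert m B. b m - b l))) = 0"
    using assms(2,3) by simp
  have vanish_Xdual: "(\<Sum>J\<in>subsets_of_card (Suc k) B. contrib_Xdual A (insert m B) a b t J
        * ((\<Prod>l\<in>J. t * b m - b l) * (\<Prod>l\<in>insert m B - J. b m - b l) * (\<Prod>j\<in>A. b m - a j))) = 0"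
  proof (intro sum.neutral ballI)
    fix J assume "J \<in> subsets_of_card (Suc k) B"
    then have "(\<Prod>l\<in>insert m B - J. b m - b l) = 0"
      using assms(2,3) by (subst prod_zero_iff) auto
    then show "contrib_Xdual A (insert m B) a b t J
        * ((\<Prod>l\<in>J. t * b m - b l) * (\<Prod>l\<in>insert m B - J. b m - b l) * (\<Prod>j\<in>A. b m - a j)) = 0"
      by simp
  qed
  show ?thesis
    unfolding cleared_genus_diff_def sum_subsets_of_card_Suc_insert[OF assms(2,3)] vanish_X vanish_Xdual
      genus_X_def genus_Xdual_def right_diff_distrib sum_distrib_left add_0_left
    by (intro arg_cong2[where f = "(-)"] sum.cong refl X Xdual) auto
qed

lemma cleared_genus_diff_at_b_over_t:
  fixes a b :: "'i \<Rightarrow> 'a::field"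
  assumes "finite A" "finite B" "m \<notin> B" "b m \<noteq> 0" "b m \<notin> a ` A" "b m \<notin> b ` B" "t * w = b m"
  shows "cleared_genus_diff k A (insert m B) a b t w
       = t ^ Suc k * (\<Prod>j\<in>A. w - a j) * (\<Prod>l\<in>insert m B. w - b l)
         * (genus_X (Suc k) A B a b t - genus_Xdual (Suc k) A B a b t)"
proof -
  let ?K = "t ^ Suc k * (\<Prod>j\<in>A. w - a j) * (\<Prod>l\<in>insert m B. w - b l)"
  have scale: "(\<Prod>i\<in>S. b m - t * c i) = t ^ card S * (\<Prod>i\<in>S. w - c i)" for S and c :: "'i \<Rightarrow> 'a"
    by (simp add: assms(7)[symmetric] prod.distrib flip: right_diff_distrib)
  have X: "contrib_X A (insert m B) a b t I
        * ((\<Prod>i\<in>I. t * w - a i) * (\<Prod>j\<in>A - I. w - a j) * (\<Prod>l\<in>insert m B. w - b l))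
      = ?K * contrib_X A B a b t I"
    if "I \<subseteq> A" "card I = Suc k" for I
  proof -
    have "(\<Prod>i\<in>I. hirz_factor t (a i / b m)) * (\<Prod>i\<in>I. b m - a i) = t ^ Suc k * (\<Prod>i\<in>I. w - a i)"
      using that assms by (subst prod_hirz_factor_cancel_den) (auto simp: image_iff scale)
    then show ?thesis
      unfolding contrib_X_insert_B[OF assms(2,3)] prod.subset_diff[OF that(1) assms(1)] assms(7)
      by (simp add: ac_simps)
  qed
  have Xdual: "contrib_Xdual A (insert m B) a b t J
        * ((\<Prod>l\<in>J. t * w - b l) * (\<Prod>l\<in>insert m B - J. w - b l) * (\<Prod>j\<in>A. w - a j))
      = ?K * contrib_Xdual A B a b t J"
    if "J \<subseteq> B" "card J = Suc k" for J
  proof -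
    have "(\<Prod>l\<in>J. hirz_factor t (b l / b m)) * (\<Prod>l\<in>J. b m - b l) = t ^ Suc k * (\<Prod>l\<in>J. w - b l)"
      using that assms by (subst prod_hirz_factor_cancel_den) (auto simp: image_iff scale)
    moreover have "insert m B - J = insert m (B - J)" "m \<notin> B - J" "finite (B - J)"
      using that assms(2,3) by auto
    ultimately show ?thesis
      unfolding contrib_Xdual_insert_B[OF assms(2,3) that(1)] prod.insert[OF assms(2,3)]
        prod.subset_diff[OF that(1) assms(2)] assms(7)
      by (simp add: ac_simps)
  qed
  have vanish_X: "(\<Sum>I\<in>subsets_of_card k A. contrib_X A (insert m B) a b t I
        * ((\<Prod>i\<in>I. w - a i) * (\<Prod>j\<in>A - I. w - t * a j) * (\<Prod>l\<in>insert m B. t * w - b l))) = 0"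
    using assms(2,3,7) by simp
  have vanish_Xdual: "(\<Sum>J\<in>subsets_of_card k B. contrib_Xdual A (insert m B) a b t (insert m J)
        * ((\<Prod>l\<in>insert m J. t * w - b l) * (\<Prod>l\<in>insert m B - insert m J. w - b l) * (\<Prod>j\<in>A. w - a j))) = 0"
  proof (intro sum.neutral ballI)
    fix J assume "J \<in> subsets_of_card k B"
    then have "(\<Prod>l\<in>insert m J. t * w - b l) = 0"
      using assms(2,3,7) by (subst prod_zero_iff) (auto intro: finite_subset)
    then show "contrib_Xdual A (insert m B) a b t (insert m J)
        * ((\<Prod>l\<in>insert m J. t * w - b l) * (\<Prod>l\<in>insert m B - insert m J. w - b l) * (\<Prod>j\<in>A. w - a j)) = 0"
      by simp
  qed
  show ?thesis
    unfolding cleared_genus_diff_def sum_subsets_of_card_Suc_insert[OF assms(2,3)] vanish_X vanish_Xdual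
      genus_X_def genus_Xdual_def right_diff_distrib sum_distrib_left add_0_right
    by (intro arg_cong2[where f = "(-)"] sum.cong refl X Xdual) auto
qed

lemma genus_X_eq_genus_Xdual_insert:
  fixes a b :: "'i \<Rightarrow> 'a::field"
  assumes "finite A" "finite B" "\<alpha> \<notin> A" "card B = Suc (card A)"
    and "inj_on a (insert \<alpha> A)" "inj_on b B" "0 \<notin> a ` insert \<alpha> A" "0 \<notin> b ` B"
    and "a ` insert \<alpha> A \<inter> b ` B = {}"
    and "t \<noteq> 0" "\<And>l m. l \<in> B \<Longrightarrow> m \<in> B \<Longrightarrow> t * b l \<noteq> b m"
    and IH: "\<And>m k. m \<in> B \<Longrightarrow> genus_X k A (B - {m}) a b t = genus_Xdual k A (B - {m}) a b t"
  shows "genus_X (Suc k) (insert \<alpha> A) B a b t = genus_Xdual (Suc k) (insert \<alpha> A) B a b t"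
proof -
  let ?G = "cleared_genus_diff k A B a b t"
  have B_m: "B = insert m (B - {m})" "finite (B - {m})" "m \<notin> B - {m}" "b m \<noteq> 0"
    "b m \<notin> a ` A" "b m \<notin> b ` (B - {m})" if "m \<in> B" for m
    using that assms(2,5,6,8,9) by (auto simp: inj_on_def)
  have root_b: "?G (b m) = 0" if "m \<in> B" for m
    using cleared_genus_diff_at_b[OF assms(1) B_m(2-6)[OF that], of k t] IH[OF that] B_m(1)[OF that] assms(8)
    by auto
  have root_b_over_t: "?G (b m / t) = 0" if "m \<in> B" for m
    using cleared_genus_diff_at_b_over_t[OF assms(1) B_m(2-6)[OF that], of t "b m / t" k] IH[OF that]
      B_m(1)[OF that] assms(10)
    by auto
  have G_eq_0: "?G z = 0" for z
  proof (rule polyfun_le_eq_0[OF polyfun_le_cleared_genus_diff[OF assms(1,2)]])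
    let ?S = "b ` B \<union> (\<lambda>l. b l / t) ` B"
    show "finite ?S"
      using assms(2) by simp
    have "inj_on (\<lambda>l. b l / t) B"
      using assms(6,10) by (auto simp: inj_on_def)
    moreover have "b ` B \<inter> (\<lambda>l. b l / t) ` B = {}"
      using assms(10,11) by (force simp: field_simps)
    ultimately have "card ?S = card B + card B"
      using assms(2,6) by (simp add: card_Un_disjoint card_image)
    then show "card A + card B < card ?S"
      using assms(4) by simp
    show "?G z = 0" if "z \<in> ?S" for z
      using that root_b root_b_over_t by auto
  qed
  have "(\<Prod>l\<in>B. a \<alpha> - b l) * (\<Prod>j\<in>A. a \<alpha> - a j) \<noteq> 0"
    using assms(1-3,5,9) by (auto simp: prod_zero_iff inj_on_def)
  moreover have "(genus_X (Suc k) (insert \<alpha> A) B a b t - genus_Xdual (Suc k) (insert \<alpha> A) B a b t)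
      * ((\<Prod>l\<in>B. a \<alpha> - b l) * (\<Prod>j\<in>A. a \<alpha> - a j)) = 0"
    using genus_diff_insert_cleared[OF assms(1-3), of "a \<alpha>" a b k t] G_eq_0 assms(3,5,7,8,9)
    by (auto simp: inj_on_def)
  ultimately show ?thesis
    by simp
qed

lemma continuous_on_hirz_factor [continuous_intros]:
  fixes f :: "'b::topological_space \<Rightarrow> 'a::real_normed_field"
  shows "continuous_on S f \<Longrightarrow> continuous_on S (\<lambda>x. hirz_factor (f x) w)"
  unfolding hirz_factor_def divide_inverse by (intro continuous_intros)

lemma continuous_on_genus_X [continuous_intros]:
  fixes a b :: "'i \<Rightarrow> 'a::real_normed_field"
  shows "continuous_on S (\<lambda>t. genus_X k A B a b t)"
  unfolding genus_X_def contrib_X_def by (intro continuous_intros)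

lemma continuous_on_genus_Xdual [continuous_intros]:
  fixes a b :: "'i \<Rightarrow> 'a::real_normed_field"
  shows "continuous_on S (\<lambda>t. genus_Xdual k A B a b t)"
  unfolding genus_Xdual_def contrib_Xdual_def by (intro continuous_intros)

lemma genus_X_0: "finite A \<Longrightarrow> genus_X 0 A B a b t = 1"
  by (simp add: genus_X_def contrib_X_def subsets_of_card_0)

lemma genus_Xdual_0: "finite B \<Longrightarrow> genus_Xdual 0 A B a b t = 1"
  by (simp add: genus_Xdual_def contrib_Xdual_def subsets_of_card_0)

lemma genus_X_eq_genus_Xdual:
  fixes a b :: "'i \<Rightarrow> 'a::real_normed_field"
  assumes "finite A" "finite B" "card A = card B" "inj_on a A" "inj_on b B"
    and "0 \<notin> a ` A" "0 \<notin> b ` B" "a ` A \<inter> b ` B = {}"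
  shows "genus_X k A B a b t = genus_Xdual k A B a b t"
  using assms
proof (induction "card B" arbitrary: A B k t)
  case 0
  then have "A = {}" "B = {}"
    by auto
  then show ?case
    by (cases k) (simp_all add: genus_X_def genus_Xdual_def subsets_of_card_0 subsets_of_card_Suc_empty
        contrib_X_def contrib_Xdual_def)
next
  case (Suc n)
  show ?case
  proof (cases k)
    case 0
    then show ?thesis
      using Suc.prems by (simp add: genus_X_0 genus_Xdual_0)
  next
    case (Suc k')
    have "A \<noteq> {}"
      using Suc.hyps(2) Suc.prems(3) by auto
    then obtain \<alpha> where "\<alpha> \<in> A"
      by blast
    define A' where "A' = A - {\<alpha>}"
    have A: "A = insert \<alpha> A'" "finite A'" "\<alpha> \<notin> A'" "card B = Suc (card A')"
      using \<open>\<alpha> \<in> A\<close> Suc.hyps(2) Suc.prems(1,3) unfolding A'_def by auto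
    have generic: "genus_X k A B a b s = genus_Xdual k A B a b s"
      if "s \<notin> insert 0 ((\<lambda>(l, m). b m / b l) ` (B \<times> B))" for s
      unfolding A(1) \<open>k = Suc k'\<close>
    proof (rule genus_X_eq_genus_Xdual_insert)
      show "s * b l \<noteq> b m" if "l \<in> B" "m \<in> B" for l m
        using that \<open>s \<notin> _\<close> Suc.prems(7) by (auto simp: field_simps image_iff)
      show "genus_X j A' (B - {m}) a b s = genus_Xdual j A' (B - {m}) a b s" if "m \<in> B" for m j
        using that Suc.hyps(2) Suc.prems A by (intro Suc.hyps(1)) (auto intro: inj_on_subset)
    qed (use that Suc.prems A in auto)
    have "genus_X k A B a b t - genus_Xdual k A B a b t = 0"
      by (rule continuous_on_const_off_finite[where f = "\<lambda>s. genus_X k A B a b s - genus_Xdual k A B a b s"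
            and S = "insert 0 ((\<lambda>(l, m). b m / b l) ` (B \<times> B))"])
        (use generic Suc.prems(2) in \<open>auto intro: continuous_intros\<close>)
    then show ?thesis
      by simp
  qed
qed

theorem theorem2p2:
  fixes k n :: nat and q t :: complex and x y :: "nat \<Rightarrow> complex"
  assumes "1 \<le> k" and "k \<le> n"
    and "q \<noteq> 0"
    and "\<And>l. l \<in> {1..n} \<Longrightarrow> x l \<noteq> 0"
    and "\<And>i. i \<in> {1..n} \<Longrightarrow> y i \<noteq> 0"
    and "\<And>i j. i \<in> {1..n} \<Longrightarrow> j \<in> {1..n} \<Longrightarrow> i \<noteq> j \<Longrightarrow> x i \<noteq> x j"
    and "\<And>i j. i \<in> {1..n} \<Longrightarrow> j \<in> {1..n} \<Longrightarrow> i \<noteq> j \<Longrightarrow> y i \<noteq> y j"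
    and "\<And>i l. i \<in> {1..n} \<Longrightarrow> l \<in> {1..n} \<Longrightarrow> y i \<noteq> q * x l"
  shows "hirz_X k n q t x y = hirz_Xdual k n q t x y"
proof -
  have "hirz_X k n q t x y = genus_X k {1..n} {1..n} y (\<lambda>l. q * x l) t"
    unfolding hirz_X_def genus_X_def contrib_X_def hirz_factor_def fixed_pts_def subsets_of_card_def
    by simp
  also have "\<dots> = genus_Xdual k {1..n} {1..n} y (\<lambda>l. q * x l) t"
  proof (rule genus_X_eq_genus_Xdual)
    show "inj_on y {1..n}"
      using assms(7) by (metis inj_onI)
    show "inj_on (\<lambda>l. q * x l) {1..n}"
      using assms(3,6) by (metis (no_types, lifting) inj_onI mult_left_cancel)
  qed (use assms(3-5,8) in \<open>auto simp: image_iff\<close>)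
  also have "\<dots> = hirz_Xdual k n q t x y"
    unfolding hirz_Xdual_def genus_Xdual_def contrib_Xdual_def hirz_factor_def fixed_pts_def subsets_of_card_def
    using assms(3) by simp
  finally show ?thesis .
qed

end
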